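(* Let $A$ be a $DP$ algebra and let $\mathrm{Ab}_A:\mathbf{DPAlg}_R/A\to\mathbf{Mod}_A$ be the abelianization functor, i.e. the left adjoint of the inclusion of abelian group objects of $\mathbf{DPAlg}_R/A$ (identified with left $U(A)$-modules). Then for every $DP$ algebra map $f:B\to A$, $$\mathrm{Ab}_A(f:B\to A)\cong U(A)\otimes_{U(B)}\Omega^{DP}_{B/R},$$ where $U(A)$ is a right $U(B)$-module via the ring map $U(B)\to U(A)$, $b\otimes u\mapsto f(b)\otimes u$, induced by $f$. In particular $\Omega^{DP}_{A/R}=\mathrm{Ab}_A(\mathrm{id}_A)$.
   Context: Fix a commutative unital ring $R$. An "algebra" means a commutative, not necessarily unital, $R$-algebra. A $DP$ algebra is an algebra $A$ with maps $\gamma_n:A\to A$ ($n\ge1$) such that for all $a,b\in A$, $r\in R$, $m,n\ge1$: $\gamma_1(a)=a$; $\gamma_n(a+b)=\gamma_n(a)+\sum_{i+j=n,\,i,j\ge1}\gamma_i(a)\gamma_j(b)+\gamma_n(b)$; $\gamma_n(ab)=a^n\gamma_n(b)$; $\gamma_n(rb)=r^n\gamma_n(b)$; $\gamma_m(a)\gamma_n(a)=\frac{(m+n)!}{m!\,n!}\gamma_{m+n}(a)$; $\gamma_m(\gamma_n(a))=\frac{(mn)!}{m!(n!)^m}\gamma_{mn}(a)$. $\mathbf{DPAlg}_R/A$ is the slice category of $DP$ maps to $A$; $\mathbf{Mod}_A$ is the category of abelian group objects in it, which is equivalent to left $U(A)$-modules $M$ via $M\mapsto(A\oplus M\to A)$.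 $A_+=A\oplus R$ with $(a,r)(b,s)=(ab+sa+rb,rs)$. $U(0)$ is the unital ring generated by $R$ and symbols $\phi_p$ ($p$ prime), commuting with one another, subject to $p\phi_p=0$ and $\phi_pr=r^p\phi_p$; set $\phi_1=1$, $\phi_{p^e}=\phi_p^e$, $\phi_n=0$ for $n>1$ not a prime power. $U(A)$ is the ring with underlying $R$-bimodule $A_+\otimes_RU(0)$ and multiplication $(a\otimes1)(b\otimes1)=ab\otimes1$, $(1\otimes u)(1\otimes v)=1\otimes uv$, $(a\otimes1)(1\otimes u)=a\otimes u$, $(1\otimes\phi_p)(a\otimes1)=0$ ($a,b\in A$). For a left $U(A)$-module $M$, $A\oplus M$ is the $DP$ algebra with $(a,x)(b,y)=(ab,ay+bx)$, $\gamma_n(a,x)=(\gamma_n a,\phi_nx+\sum_{i+j=n,\,i,j\ge1}\gamma_i(a)\phi_j(x))$; a $DP$ derivation $s:A\to M$ is an $R$-linear map such that $a\mapsto(a,s(a))$ is a $DP$ algebra map $A\to A\oplus M$. $\Omega^{DP}_{B/R}$ is the left $U(B)$-module target of the universal $DP$ derivation of $B$. *)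

theory Defs
  imports "HOL-Computational_Algebra.Primes"
begin

text \<open>An R-algebra (commutative, not necessarily unital) together with divided power
operations gam n (only n >= 1 is relevant). The base ring R is a type 'r::comm_ring_1.\<close>

record ('r, 'a) dpalg =
  zer :: 'a
  pls :: "'a \<Rightarrow> 'a \<Rightarrow> 'a"
  ngt :: "'a \<Rightarrow> 'a"
  mlt :: "'a \<Rightarrow> 'a \<Rightarrow> 'a"
  scl :: "'r \<Rightarrow> 'a \<Rightarrow> 'a"
  gam :: "nat \<Rightarrow> 'a \<Rightarrow> 'a"

fun nsum :: "('a \<Rightarrow> 'a \<Rightarrow> 'a) \<Rightarrow> 'a \<Rightarrow> (nat \<Rightarrow> 'a) \<Rightarrow> nat \<Rightarrow> 'a" where
  "nsum p z f 0 = z"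
| "nsum p z f (Suc k) = p (nsum p z f k) (f k)"

definition nmul :: "('a \<Rightarrow> 'a \<Rightarrow> 'a) \<Rightarrow> 'a \<Rightarrow> nat \<Rightarrow> 'a \<Rightarrow> 'a" where
  "nmul p z k x = nsum p z (\<lambda>_. x) k"

text \<open>Sum over i + j = n with i, j >= 1 of F i j.\<close>
definition splitsum :: "('a \<Rightarrow> 'a \<Rightarrow> 'a) \<Rightarrow> 'a \<Rightarrow> nat \<Rightarrow> (nat \<Rightarrow> nat \<Rightarrow> 'a) \<Rightarrow> 'a" where
  "splitsum p z n F = nsum p z (\<lambda>k. F (Suc k) (n - Suc k)) (n - 1)"

text \<open>Positive powers a^n (n >= 1) in a non-unital algebra.\<close>
fun npow :: "('r, 'a, 'x) dpalg_scheme \<Rightarrow> 'a \<Rightarrow> nat \<Rightarrow> 'a" where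
  "npow A a 0 = zer A"
| "npow A a (Suc 0) = a"
| "npow A a (Suc (Suc k)) = mlt A a (npow A a (Suc k))"

definition ab_grp :: "'a \<Rightarrow> ('a \<Rightarrow> 'a \<Rightarrow> 'a) \<Rightarrow> ('a \<Rightarrow> 'a) \<Rightarrow> bool" where
  "ab_grp z p ng \<longleftrightarrow>
     (\<forall>x y w. p (p x y) w = p x (p y w)) \<and> (\<forall>x y. p x y = p y x) \<and>
     (\<forall>x. p z x = x) \<and> (\<forall>x. p (ng x) x = z)"

definition r_mod :: "'a \<Rightarrow> ('a \<Rightarrow> 'a \<Rightarrow> 'a) \<Rightarrow> ('a \<Rightarrow> 'a) \<Rightarrow> ('r::comm_ring_1 \<Rightarrow> 'a \<Rightarrow> 'a) \<Rightarrow> bool" where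
  "r_mod z p ng s \<longleftrightarrow> ab_grp z p ng \<and>
     (\<forall>r x y. s r (p x y) = p (s r x) (s r y)) \<and>
     (\<forall>r q x. s (r + q) x = p (s r x) (s q x)) \<and>
     (\<forall>r q x. s (r * q) x = s r (s q x)) \<and>
     (\<forall>x. s 1 x = x)"

definition is_alg :: "('r::comm_ring_1, 'a) dpalg \<Rightarrow> bool" where
  "is_alg A \<longleftrightarrow> r_mod (zer A) (pls A) (ngt A) (scl A) \<and>
     (\<forall>x y w. mlt A (mlt A x y) w = mlt A x (mlt A y w)) \<and>
     (\<forall>x y. mlt A x y = mlt A y x) \<and>
     (\<forall>x y w. mlt A x (pls A y w) = pls A (mlt A x y) (mlt A x w)) \<and>
     (\<forall>r x y. scl A r (mlt A x y) = mlt A (scl A r x) y)"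

definition is_dp :: "('r::comm_ring_1, 'a) dpalg \<Rightarrow> bool" where
  "is_dp A \<longleftrightarrow> is_alg A \<and>
     (\<forall>a. gam A 1 a = a) \<and>
     (\<forall>n a b. n \<ge> 1 \<longrightarrow> gam A n (pls A a b) =
        pls A (pls A (gam A n a) (splitsum (pls A) (zer A) n (\<lambda>i j. mlt A (gam A i a) (gam A j b))))
              (gam A n b)) \<and>
     (\<forall>n a b. n \<ge> 1 \<longrightarrow> gam A n (mlt A a b) = mlt A (npow A a n) (gam A n b)) \<and>
     (\<forall>n r b. n \<ge> 1 \<longrightarrow> gam A n (scl A r b) = scl A (r ^ n) (gam A n b)) \<and>
     (\<forall>m n a. m \<ge> 1 \<longrightarrow> n \<ge> 1 \<longrightarrow>
        mlt A (gam A m a) (gam A n a) = nmul (pls A) (zer A) ((m + n) choose m) (gam A (m + n) a)) \<and>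
     (\<forall>m n a. m \<ge> 1 \<longrightarrow> n \<ge> 1 \<longrightarrow>
        gam A m (gam A n a) =
          nmul (pls A) (zer A) (fact (m * n) div (fact m * fact n ^ m)) (gam A (m * n) a))"

definition dp_hom :: "('r::comm_ring_1, 'a) dpalg \<Rightarrow> ('r, 'b) dpalg \<Rightarrow> ('a \<Rightarrow> 'b) \<Rightarrow> bool" where
  "dp_hom A B f \<longleftrightarrow>
     (\<forall>x y. f (pls A x y) = pls B (f x) (f y)) \<and>
     (\<forall>r x. f (scl A r x) = scl B r (f x)) \<and>
     (\<forall>x y. f (mlt A x y) = mlt B (f x) (f y)) \<and>
     (\<forall>n x. n \<ge> 1 \<longrightarrow> f (gam A n x) = gam B n (f x))"

text \<open>A left U(A)-module is given by the action of the generators of U(A):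
the scalars r in R, the elements a of A (as a \<otimes> 1) and the symbols phi_p (p prime),
subject to the defining relations of U(A).\<close>

record ('r, 'a, 'm) umod =
  mz :: 'm
  mp :: "'m \<Rightarrow> 'm \<Rightarrow> 'm"
  mn :: "'m \<Rightarrow> 'm"
  ms :: "'r \<Rightarrow> 'm \<Rightarrow> 'm"
  act :: "'a \<Rightarrow> 'm \<Rightarrow> 'm"
  phi :: "nat \<Rightarrow> 'm \<Rightarrow> 'm"

definition is_umod :: "('r::comm_ring_1, 'a) dpalg \<Rightarrow> ('r, 'a, 'm) umod \<Rightarrow> bool" where
  "is_umod A M \<longleftrightarrow> r_mod (mz M) (mp M) (mn M) (ms M) \<and>
     (\<forall>a b x. act M (pls A a b) x = mp M (act M a x) (act M b x)) \<and>
     (\<forall>a x y. act M a (mp M x y) = mp M (act M a x) (act M a y)) \<and>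
     (\<forall>a b x. act M (mlt A a b) x = act M a (act M b x)) \<and>
     (\<forall>r a x. act M (scl A r a) x = ms M r (act M a x)) \<and>
     (\<forall>r a x. act M a (ms M r x) = ms M r (act M a x)) \<and>
     (\<forall>p x y. prime p \<longrightarrow> phi M p (mp M x y) = mp M (phi M p x) (phi M p y)) \<and>
     (\<forall>p x. prime p \<longrightarrow> ms M (of_nat p) (phi M p x) = mz M) \<and>
     (\<forall>p r x. prime p \<longrightarrow> phi M p (ms M r x) = ms M (r ^ p) (phi M p x)) \<and>
     (\<forall>p q x. prime p \<longrightarrow> prime q \<longrightarrow> phi M p (phi M q x) = phi M q (phi M p x)) \<and>
     (\<forall>p a x. prime p \<longrightarrow> phi M p (act M a x) = mz M)"

definition phin :: "('r, 'a, 'm) umod \<Rightarrow> nat \<Rightarrow> 'm \<Rightarrow> 'm" where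
  "phin M n x =
    (if n = 1 then x
     else if (\<exists>p e. prime p \<and> n = p ^ e)
       then (let p = (SOME p. prime p \<and> (\<exists>e. n = p ^ e)) in
             (phi M p ^^ multiplicity p n) x)
       else mz M)"

definition umod_hom :: "('r::comm_ring_1, 'a) dpalg \<Rightarrow> ('r, 'a, 'm) umod \<Rightarrow> ('r, 'a, 'n) umod \<Rightarrow> ('m \<Rightarrow> 'n) \<Rightarrow> bool" where
  "umod_hom A M N h \<longleftrightarrow>
     (\<forall>x y. h (mp M x y) = mp N (h x) (h y)) \<and>
     (\<forall>r x. h (ms M r x) = ms N r (h x)) \<and>
     (\<forall>a x. h (act M a x) = act N a (h x)) \<and>
     (\<forall>p x. prime p \<longrightarrow> h (phi M p x) = phi N p (h x))"

text \<open>Restriction of scalars along U(B) \<rightarrow> U(A), b \<otimes> u \<mapsto> f b \<otimes> u.\<close>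
definition restr :: "('b \<Rightarrow> 'a) \<Rightarrow> ('r, 'a, 'm) umod \<Rightarrow> ('r, 'b, 'm) umod" where
  "restr f M = \<lparr>mz = mz M, mp = mp M, mn = mn M, ms = ms M,
                act = (\<lambda>b x. act M (f b) x), phi = phi M\<rparr>"

text \<open>The square-zero DP algebra A \<oplus> M.\<close>
definition sqz :: "('r, 'a) dpalg \<Rightarrow> ('r, 'a, 'm) umod \<Rightarrow> ('r, 'a \<times> 'm) dpalg" where
  "sqz A M = \<lparr>zer = (zer A, mz M),
     pls = (\<lambda>(a, x) (b, y). (pls A a b, mp M x y)),
     ngt = (\<lambda>(a, x). (ngt A a, mn M x)),
     mlt = (\<lambda>(a, x) (b, y). (mlt A a b, mp M (act M a y) (act M b x))),
     scl = (\<lambda>r (a, x). (scl A r a, ms M r x)),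
     gam = (\<lambda>n (a, x). (gam A n a,
              mp M (phin M n x) (splitsum (mp M) (mz M) n (\<lambda>i j. act M (gam A i a) (phin M j x)))))\<rparr>"

definition dp_der :: "('r::comm_ring_1, 'a) dpalg \<Rightarrow> ('r, 'a, 'm) umod \<Rightarrow> ('a \<Rightarrow> 'm) \<Rightarrow> bool" where
  "dp_der A M s \<longleftrightarrow> dp_hom A (sqz A M) (\<lambda>a. (a, s a))"

text \<open>(W, d) is a universal DP derivation of B (Omega^DP_{B/R}), tested against all
U(B)-modules whose underlying type is 'm.\<close>
definition univ_der :: "('r::comm_ring_1, 'b) dpalg \<Rightarrow> ('r, 'b, 'w) umod \<Rightarrow> ('b \<Rightarrow> 'w) \<Rightarrow> 'm itself \<Rightarrow> bool" where
  "univ_der B W d _ \<longleftrightarrow> is_umod B W \<and> dp_der B W d \<and>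
     (\<forall>(M :: ('r, 'b, 'm) umod) s. is_umod B M \<and> dp_der B M s \<longrightarrow>
        (\<exists>!h. umod_hom B W M h \<and> (\<forall>b. h (d b) = s b)))"

text \<open>(T, tau) is the extension of scalars U(A) \<otimes>_{U(B)} W along f (characterised by
its universal property: left adjoint of restriction), tested against modules on type 'm.\<close>
definition base_change :: "('r::comm_ring_1, 'a) dpalg \<Rightarrow> ('r, 'b) dpalg \<Rightarrow> ('b \<Rightarrow> 'a) \<Rightarrow>
    ('r, 'b, 'w) umod \<Rightarrow> ('r, 'a, 't) umod \<Rightarrow> ('w \<Rightarrow> 't) \<Rightarrow> 'm itself \<Rightarrow> bool" where
  "base_change A B f W T tau _ \<longleftrightarrow> is_umod A T \<and> umod_hom B W (restr f T) tau \<and>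
     (\<forall>(M :: ('r, 'a, 'm) umod) g. is_umod A M \<and> umod_hom B W (restr f M) g \<longrightarrow>
        (\<exists>!h. umod_hom A T M h \<and> (\<forall>x. h (tau x) = g x)))"

text \<open>(N, eta) is Ab_A(f : B \<rightarrow> A): eta : B \<rightarrow> A \<oplus> N is a map in DPAlg_R/A which is universal
among maps from (f : B \<rightarrow> A) to abelian group objects A \<oplus> M (U(A)-modules M on type 'm);
morphisms of abelian group objects A \<oplus> N \<rightarrow> A \<oplus> M are id \<oplus> h with h U(A)-linear.\<close>
definition is_abelianization :: "('r::comm_ring_1, 'a) dpalg \<Rightarrow> ('r, 'b) dpalg \<Rightarrow> ('b \<Rightarrow> 'a) \<Rightarrow>
    ('r, 'a, 'n) umod \<Rightarrow> ('b \<Rightarrow> 'a \<times> 'n) \<Rightarrow> 'm itself \<Rightarrow> bool" where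
  "is_abelianization A B f N eta _ \<longleftrightarrow> is_umod A N \<and> dp_hom B (sqz A N) eta \<and>
     (\<forall>b. fst (eta b) = f b) \<and>
     (\<forall>(M :: ('r, 'a, 'm) umod) g. is_umod A M \<and> dp_hom B (sqz A M) g \<and> (\<forall>b. fst (g b) = f b) \<longrightarrow>
        (\<exists>!h. umod_hom A N M h \<and> (\<forall>b. g b = (fst (eta b), h (snd (eta b))))))"

end

theory Submission
  imports Defs
begin

text \<open>A DP algebra map B \<rightarrow> A \<oplus> M over f is the same as a DP derivation of B into M viewed
as a U(B)-module. By the universal properties of Omega^DP_{B/R} and of extension of scalars, such
derivations correspond to U(B)-linear maps Omega^DP_{B/R} \<rightarrow> M, and these in turn to U(A)-linear maps
U(A) \<otimes>_U(B) Omega^DP_{B/R} \<rightarrow> M. The case f = id is the special case in which extension of scalars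
is the identity.\<close>

lemma umod_hom_zero:
  assumes "umod_hom X M N h" "is_umod Y M" "is_umod Z N"
  shows "h (mz M) = mz N"
proof -
  have gM: "ab_grp (mz M) (mp M) (mn M)" and gN: "ab_grp (mz N) (mp N) (mn N)"
    using assms(2,3) unfolding is_umod_def r_mod_def by blast+
  have "mp M (mz M) (mz M) = mz M" using gM unfolding ab_grp_def by blast
  hence "mp N (h (mz M)) (h (mz M)) = h (mz M)" using assms(1) unfolding umod_hom_def by metis
  with gN show ?thesis unfolding ab_grp_def by metis
qed

lemma nsum_hom:
  assumes "\<And>x y. h (p x y) = q (h x) (h y)" "h z = z'"
  shows "h (nsum p z F k) = nsum q z' (\<lambda>i. h (F i)) k"
  by (induction k) (simp_all add: assms)

lemma splitsum_hom:
  assumes "\<And>x y. h (p x y) = q (h x) (h y)" "h z = z'"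
  shows "h (splitsum p z n F) = splitsum q z' n (\<lambda>i j. h (F i j))"
  unfolding splitsum_def using nsum_hom[of h p q z z', OF assms] by simp

lemma umod_hom_phi_funpow:
  assumes "umod_hom X M N h" "prime p"
  shows "h ((phi M p ^^ k) x) = (phi N p ^^ k) (h x)"
  using assms by (induction k) (auto simp: umod_hom_def)

lemma umod_hom_phin:
  assumes "umod_hom X M N h" "h (mz M) = mz N"
  shows "h (phin M n x) = phin N n (h x)"
proof -
  define p where "p = (SOME p. prime p \<and> (\<exists>e. n = p ^ e))"
  have "h ((phi M p ^^ multiplicity p n) x) = (phi N p ^^ multiplicity p n) (h x)"
    if "\<exists>p e. prime p \<and> n = p ^ e"
  proof -
    have "prime p"
      using someI_ex[of "\<lambda>p. prime p \<and> (\<exists>e. n = p ^ e)"] that unfolding p_def by blast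
    then show ?thesis using umod_hom_phi_funpow[OF assms(1)] by blast
  qed
  then show ?thesis unfolding phin_def Let_def p_def[symmetric] using assms(2) by auto
qed

lemma dp_der_umod_hom_comp:
  assumes "dp_der B W d" "umod_hom B W N h" "h (mz W) = mz N"
  shows "dp_der B N (\<lambda>b. h (d b))"
proof -
  have hp: "\<And>x y. h (mp W x y) = mp N (h x) (h y)" and hs: "\<And>r x. h (ms W r x) = ms N r (h x)"
    and ha: "\<And>a x. h (act W a x) = act N a (h x)"
    using assms(2) unfolding umod_hom_def by auto
  note ph = umod_hom_phin[OF assms(2,3)]
  note sp = splitsum_hom[of h "mp W" "mp N", OF hp assms(3)]
  from assms(1) show ?thesis
    unfolding dp_der_def dp_hom_def sqz_def by (auto simp: hp hs ha ph sp)
qed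

lemma umod_hom_comp:
  "umod_hom B W X g \<Longrightarrow> umod_hom B X Y h \<Longrightarrow> umod_hom B W Y (\<lambda>x. h (g x))"
  unfolding umod_hom_def by simp

lemma phin_restr: "phin (restr f M) = phin M"
  unfolding phin_def restr_def by (simp only: umod.select_convs)

lemma restr_id [simp]: "restr id M = M"
  unfolding restr_def by simp

lemma is_umod_restr:
  assumes "is_umod A M" "dp_hom B A f"
  shows "is_umod B (restr f M)"
  using assms unfolding is_umod_def dp_hom_def restr_def by simp

lemma umod_hom_restr: "umod_hom A M N h \<Longrightarrow> umod_hom B (restr f M) (restr f N) h"
  unfolding umod_hom_def restr_def by simp

lemma dp_der_restr_iff:
  assumes "dp_hom B A f"
  shows "dp_der B (restr f M) s \<longleftrightarrow> dp_hom B (sqz A M) (\<lambda>b. (f b, s b))"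
proof -
  have fg: "\<And>i x. f (gam B (Suc i) x) = gam A (Suc i) (f x)"
    using assms unfolding dp_hom_def by auto
  have "\<And>n x y. splitsum (mp M) (mz M) n (\<lambda>i j. act M (f (gam B i x)) (phin M j y))
     = splitsum (mp M) (mz M) n (\<lambda>i j. act M (gam A i (f x)) (phin M j y))"
    by (simp add: splitsum_def fg)
  with assms show ?thesis
    unfolding dp_der_def dp_hom_def sqz_def phin_restr by (simp add: restr_def)
qed

lemma dp_hom_id: "dp_hom A A id"
  unfolding dp_hom_def by simp

lemma base_change_id:
  assumes "is_umod A W"
  shows "base_change A A id W W id TYPE('m)"
  using assms unfolding base_change_def umod_hom_def by (auto intro!: ext)

lemma base_change_univ_der_ex1:
  fixes M :: "('r::comm_ring_1, 'a, 'm) umod"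
  assumes "dp_hom B A f" "univ_der B W d TYPE('m)" "base_change A B f W T tau TYPE('m)"
    and "is_umod A M" "dp_der B (restr f M) s"
  shows "\<exists>!h. umod_hom A T M h \<and> (\<forall>b. h (tau (d b)) = s b)"
proof -
  have tau: "umod_hom B W (restr f T) tau"
    using assms(3) unfolding base_change_def by blast
  obtain h\<^sub>B where h\<^sub>B: "umod_hom B W (restr f M) h\<^sub>B" "\<forall>b. h\<^sub>B (d b) = s b"
    and h\<^sub>B_unique: "\<And>k. umod_hom B W (restr f M) k \<Longrightarrow> \<forall>b. k (d b) = s b \<Longrightarrow> k = h\<^sub>B"
    using assms(2,4,5) is_umod_restr[OF assms(4,1)] unfolding univ_der_def by metis
  obtain h where h: "umod_hom A T M h" "\<forall>x. h (tau x) = h\<^sub>B x"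
    and h_unique: "\<And>k. umod_hom A T M k \<Longrightarrow> \<forall>x. k (tau x) = h\<^sub>B x \<Longrightarrow> k = h"
    using assms(3,4) h\<^sub>B(1) unfolding base_change_def by metis
  show ?thesis
  proof (rule ex1I[of _ h])
    show "umod_hom A T M h \<and> (\<forall>b. h (tau (d b)) = s b)" using h h\<^sub>B by simp
  next
    fix k assume k: "umod_hom A T M k \<and> (\<forall>b. k (tau (d b)) = s b)"
    then have "umod_hom B W (restr f M) (\<lambda>x. k (tau x))"
      using umod_hom_comp[OF tau umod_hom_restr] by blast
    with k have "(\<lambda>x. k (tau x)) = h\<^sub>B" using h\<^sub>B_unique by blast
    with k show "k = h" using h_unique by metis
  qed
qed

lemma is_abelianization_base_change:
  fixes T :: "('r::comm_ring_1, 'a, 't) umod"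
  assumes f: "dp_hom B A f" and W: "univ_der B W d TYPE('m)"
    and T: "base_change A B f W T tau TYPE('m)"
  shows "is_abelianization A B f T (\<lambda>b. (f b, tau (d b))) TYPE('m)"
  unfolding is_abelianization_def
proof (intro conjI allI impI)
  show uT: "is_umod A T" using T unfolding base_change_def by blast
  have tau: "umod_hom B W (restr f T) tau" using T unfolding base_change_def by blast
  have "tau (mz W) = mz (restr f T)"
    using umod_hom_zero[OF tau _ is_umod_restr[OF uT f]] W unfolding univ_der_def by blast
  then have "dp_der B (restr f T) (\<lambda>b. tau (d b))"
    using dp_der_umod_hom_comp W tau unfolding univ_der_def by blast
  then show "dp_hom B (sqz A T) (\<lambda>b. (f b, tau (d b)))" using dp_der_restr_iff[OF f, of T "\<lambda>b. tau (d b)"] by simp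
  show "\<And>b. fst (f b, tau (d b)) = f b" by simp
  fix M :: "('r, 'a, 'm) umod" and g
  assume H: "is_umod A M \<and> dp_hom B (sqz A M) g \<and> (\<forall>b. fst (g b) = f b)"
  then have g: "g = (\<lambda>b. (f b, snd (g b)))" by (metis prod.collapse)
  with H have "dp_der B (restr f M) (\<lambda>b. snd (g b))" using dp_der_restr_iff[OF f] by metis
  then have "\<exists>!h. umod_hom A T M h \<and> (\<forall>b. h (tau (d b)) = snd (g b))"
    using base_change_univ_der_ex1[OF f W T] H by blast
  moreover have "(\<forall>b. g b = (fst (f b, tau (d b)), h (snd (f b, tau (d b)))))
      \<longleftrightarrow> (\<forall>b. h (tau (d b)) = snd (g b))" for h
    by (subst g) auto
  ultimately show "\<exists>!h. umod_hom A T M h \<and> (\<forall>b. g b = (fst (f b, tau (d b)), h (snd (f b, tau (d b)))))"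
    by simp
qed

theorem mainTheorem11:
  fixes A :: "('r::comm_ring_1, 'a) dpalg" and B :: "('r, 'b) dpalg" and f :: "'b \<Rightarrow> 'a"
    and W :: "('r, 'b, 'w) umod" and d :: "'b \<Rightarrow> 'w"
    and T :: "('r, 'a, 't) umod" and tau :: "'w \<Rightarrow> 't"
    and WA :: "('r, 'a, 'v) umod" and dA :: "'a \<Rightarrow> 'v"
  assumes "is_dp A" and "is_dp B" and "dp_hom B A f"
    and "univ_der B W d TYPE('m)"
    and "base_change A B f W T tau TYPE('m)"
  shows "is_abelianization A B f T (\<lambda>b. (f b, tau (d b))) TYPE('m)
       \<and> (univ_der A WA dA TYPE('m) \<longrightarrow> is_abelianization A A id WA (\<lambda>a. (a, dA a)) TYPE('m))"
proof (intro conjI impI)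
  show "is_abelianization A B f T (\<lambda>b. (f b, tau (d b))) TYPE('m)"
    using is_abelianization_base_change assms(3-5) by blast
  assume WA: "univ_der A WA dA TYPE('m)"
  then have "base_change A A id WA WA id TYPE('m)"
    using base_change_id unfolding univ_der_def by blast
  from is_abelianization_base_change[OF dp_hom_id WA this]
  show "is_abelianization A A id WA (\<lambda>a. (a, dA a)) TYPE('m)" by simp
qed

end
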